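(* Let $\mathbb{F}\in\{\mathbb{R},\mathbb{C}\}$ and $m\le n\le 2m$. For the $m\times n\times 2$ tensor $$X=\Big((E_m,O);\begin{pmatrix}O&E_{\lfloor n/2\rfloor}\\ O&O\end{pmatrix}\Big)$$ (the second slice being the $m\times n$ matrix with an identity block $E_{\lfloor n/2\rfloor}$ in its top-right corner and zeros elsewhere), one has $\mathrm{rank}_{\mathbb{F}}(X)=m+\lfloor n/2\rfloor$.
   Context: $E_k$ is the $k\times k$ identity, $(E_m,O)$ is the $m\times n$ matrix obtained by concatenating $E_m$ with a zero $m\times(n-m)$ block. $(A;B)$ denotes the tensor with slices $A,B$. A rank-one tensor has the form $(\alpha\,\mathbf{a}\mathbf{b}^T;\beta\,\mathbf{a}\mathbf{b}^T)$ with nonzero $\mathbf{a},\mathbf{b}$, $(\alpha,\beta)\ne0$; $\mathrm{rank}_{\mathbb{F}}$ is the minimal number of rank-one tensors over $\mathbb{F}$ summing slicewise to the tensor. *)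

theory Defs
  imports Complex_Main
begin

text \<open>Matrices are represented as functions nat => nat => 'a, only entries with
  row index < m and column index < n are relevant. An m x n x 2 tensor is a pair
  of slices (A;B).\<close>

definition tensor_rank2 :: "nat \<Rightarrow> nat \<Rightarrow> (nat \<Rightarrow> nat \<Rightarrow> 'a::field) \<Rightarrow> (nat \<Rightarrow> nat \<Rightarrow> 'a) \<Rightarrow> nat" where
  "tensor_rank2 m n A B = (LEAST r. \<exists>(\<alpha>::nat \<Rightarrow> 'a) (\<beta>::nat \<Rightarrow> 'a) (a::nat \<Rightarrow> nat \<Rightarrow> 'a) (b::nat \<Rightarrow> nat \<Rightarrow> 'a).
      (\<forall>k<r. (\<exists>i<m. a k i \<noteq> 0) \<and> (\<exists>j<n. b k j \<noteq> 0) \<and> (\<alpha> k, \<beta> k) \<noteq> (0, 0)) \<and>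
      (\<forall>i<m. \<forall>j<n. A i j = (\<Sum>k<r. \<alpha> k * a k i * b k j) \<and>
                     B i j = (\<Sum>k<r. \<beta> k * a k i * b k j)))"

definition slice1 :: "nat \<Rightarrow> nat \<Rightarrow> 'a::field" where
  "slice1 i j = (if i = j then 1 else 0)"

definition slice2 :: "nat \<Rightarrow> nat \<Rightarrow> nat \<Rightarrow> 'a::field" where
  "slice2 n i j = (if i < n div 2 \<and> j = (n - n div 2) + i then 1 else 0)"

end

theory Submission
  imports Defs "HOL-Library.Function_Algebras"
begin

(* Put k = n div 2 and c = n - k, so that k <= c <= m <= c + k = n.
   Upper bound: the slices split into the m rank-one terms (e_i e_i^T; 0) and the
   k rank-one terms (0; e_i e_(c+i)^T).
   Lower bound: given a decomposition with r terms, let U be the span of the r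
   stacked vectors (alpha_l a_l; beta_l a_l) in F^m x F^m; every column of the tensor
   lies in U.  The first m columns are (e_j; Z e_j), where Z is the shift by c, a
   linear map with Z o Z = 0.  With W = {y. (0; y) in U} this gives
   r >= dim U >= m + dim W.  Using that every generator of U is "rank one" one shows
   that e_0, ..., e_(k-1) lie in the span of (W n ker Z) u Z(W), a space of dimension
   at most dim W (rank-nullity on W); hence dim W >= k and r >= m + k. *)

section \<open>Abstract linear algebra\<close>

context vector_space
begin

(* Rank-nullity in the form needed: the kernel part of a finite-dimensional W together
   with the image of W is spanned by at most dim W vectors. *)
lemma kernel_image_span_bound:
  assumes Z: "module_hom scale scale Z" and W: "W \<subseteq> span F" "finite F"
  obtains S where "finite S" "card S \<le> dim W" "(W \<inter> {x. Z x = 0}) \<union> Z ` W \<subseteq> span S"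
proof -
  obtain B0 where B0: "B0 \<subseteq> W \<inter> {x. Z x = 0}" "independent B0" "W \<inter> {x. Z x = 0} \<subseteq> span B0"
    by (rule maximal_independent_subset)
  obtain B where B: "B0 \<subseteq> B" "B \<subseteq> W" "independent B" "W \<subseteq> span B"
    by (rule maximal_independent_subset_extend[of B0 W]) (use B0 in auto)
  have finB: "finite B"
    using independent_span_bound[OF W(2) B(3)] B(2) W(1) by auto
  have cardB: "card B = dim W"
    using B by (intro basis_card_eq_dim) auto
  define S where "S = B0 \<union> Z ` (B - B0)"
  show thesis
  proof
    show "finite S" using finB B(1) unfolding S_def by (auto intro: finite_subset)
    have "card S \<le> card B0 + card (Z ` (B - B0))" unfolding S_def by (rule card_Un_le)
    also have "\<dots> \<le> card B0 + card (B - B0)" using finB by (simp add: card_image_le)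
    also have "\<dots> = card B" using finB B(1) by (metis card_Diff_subset finite_subset card_mono le_add_diff_inverse)
    finally show "card S \<le> dim W" using cardB by simp
    have "Z ` B \<subseteq> span S"
    proof
      fix y assume "y \<in> Z ` B"
      then obtain x where x: "x \<in> B" "y = Z x" by auto
      show "y \<in> span S"
      proof (cases "x \<in> B0")
        case True then show ?thesis using B0(1) x by (auto simp: span_zero)
      next
        case False then show ?thesis using x unfolding S_def by (intro span_base) auto
      qed
    qed
    then have "Z ` W \<subseteq> span S"
      using module_hom.spans_image[OF Z B(4)] span_minimal[OF _ subspace_span] by blast
    moreover have "W \<inter> {x. Z x = 0} \<subseteq> span S"
      using B0(3) span_mono[of B0 S] unfolding S_def by auto
    ultimately show "(W \<inter> {x. Z x = 0}) \<union> Z ` W \<subseteq> span S" by blast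
  qed
qed

lemma square_zero_image_in_span:
  assumes Z: "module_hom scale scale Z" "\<And>y. Z (Z y) = 0"
    and W: "subspace W" "t *s x - Z x \<in> W"
  shows "Z x \<in> span ((W \<inter> {y. Z y = 0}) \<union> Z ` W)"
proof (cases "t = 0")
  case True
  then have "Z x = - (t *s x - Z x)" by simp
  then have "Z x \<in> W" using W subspace_neg by metis
  then show ?thesis using Z(2) by (intro span_base) auto
next
  case False
  have "Z (t *s x - Z x) = t *s Z x"
    using module_hom.diff[OF Z(1)] module_hom.scale[OF Z(1)] Z(2) by simp
  then have "Z x = (1 / t) *s Z (t *s x - Z x)" using False by simp
  then show ?thesis using W(2) by (metis span_base span_scale UnCI imageI)
qed

end

(* Vectors with entries in a field are represented by functions into the field;
   only finitely many coordinates will matter. *)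
definition fsc :: "'a::field \<Rightarrow> ('b \<Rightarrow> 'a) \<Rightarrow> ('b \<Rightarrow> 'a)" where
  "fsc c f = (\<lambda>x. c * f x)"

lemma fsc_apply: "fsc c f x = c * f x"
  by (simp add: fsc_def)

interpretation fv: vector_space "fsc :: 'a::field \<Rightarrow> ('b \<Rightarrow> 'a) \<Rightarrow> ('b \<Rightarrow> 'a)"
  by unfold_locales (auto simp: fun_eq_iff algebra_simps fsc_def)

lemma sum_fun_apply: "(\<Sum>l\<in>S. f l) x = (\<Sum>l\<in>S. f l x)"
  by (induction S rule: infinite_finite_induct) auto

lemma independent_insert_coordinate:
  assumes "fv.independent S" "\<forall>u\<in>S. u p = 0" "v p \<noteq> (0::'a::field)"
  shows "fv.independent (insert v S)"
proof (rule fv.independent_insertI)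
  have "fv.subspace {f :: 'b \<Rightarrow> 'a. f p = 0}"
    by (auto simp: fv.subspace_def fsc_apply)
  then have "fv.span S \<subseteq> {f. f p = 0}" using assms(2) by (intro fv.span_minimal) auto
  then show "v \<notin> fv.span S" using assms(3) by blast
qed fact

definition unit_vec :: "nat \<Rightarrow> nat \<Rightarrow> 'a::field" where
  "unit_vec i = (\<lambda>x. if x = i then 1 else 0)"

lemma unit_vecs_independent: "fv.independent ((unit_vec :: nat \<Rightarrow> nat \<Rightarrow> 'a::field) ` {..<q})"
proof (induction q)
  case 0 then show ?case by (metis lessThan_0 image_empty fv.independent_empty)
next
  case (Suc q)
  have "fv.independent (insert (unit_vec q :: nat \<Rightarrow> 'a) (unit_vec ` {..<q}))"
    by (rule independent_insert_coordinate[where p=q, OF Suc.IH]) (auto simp: unit_vec_def)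
  then show ?case by (metis lessThan_Suc image_insert)
qed

lemma inj_unit_vec: "inj (unit_vec :: nat \<Rightarrow> nat \<Rightarrow> 'a::field)"
proof (rule injI)
  fix i j assume "(unit_vec i :: nat \<Rightarrow> 'a) = unit_vec j"
  then have "(unit_vec i :: nat \<Rightarrow> 'a) i = unit_vec j i" by simp
  then show "i = j" by (simp add: unit_vec_def split: if_splits)
qed

lemma unit_vec_nonzero: "(unit_vec j :: nat \<Rightarrow> 'a::field) \<noteq> 0"
  by (metis unit_vec_def zero_neq_one zero_fun_def)

lemma card_unit_vecs: "card ((unit_vec :: nat \<Rightarrow> nat \<Rightarrow> 'a::field) ` {..<q}) = q"
  by (metis card_image card_lessThan inj_unit_vec inj_on_subset subset_UNIV)

lemma unit_vec_expansion:
  assumes "\<forall>i\<ge>m. x i = 0"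
  shows "x = (\<Sum>j<m. fsc (x j) (unit_vec j))"
  using assms by (auto simp: fun_eq_iff sum_fun_apply fsc_apply unit_vec_def if_distrib not_less cong: if_cong)

section \<open>Stacked vectors\<close>

definition stack :: "(nat \<Rightarrow> 'a) \<Rightarrow> (nat \<Rightarrow> 'a) \<Rightarrow> bool \<times> nat \<Rightarrow> 'a" where
  "stack x y = (\<lambda>(s, i). if s then x i else y i)"

definition upper :: "(bool \<times> nat \<Rightarrow> 'a) \<Rightarrow> nat \<Rightarrow> 'a" where
  "upper v = (\<lambda>i. v (True, i))"

definition lower :: "(bool \<times> nat \<Rightarrow> 'a) \<Rightarrow> nat \<Rightarrow> 'a" where
  "lower v = (\<lambda>i. v (False, i))"

lemma stack_apply [simp]: "stack x y (True, i) = x i" "stack x y (False, i) = y i"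
  by (simp_all add: stack_def)

lemma upper_stack [simp]: "upper (stack x y) = x"
  and lower_stack [simp]: "lower (stack x y) = y"
  by (auto simp: upper_def lower_def stack_def)

lemma stack_eq_iff: "stack x y = stack x' y' \<longleftrightarrow> x = x' \<and> y = y'"
  by (metis upper_stack lower_stack)

lemma stack_add: "stack x y + stack x' y' = stack (x + x') (y + y')"
  and stack_diff: "stack x y - stack x' y' = stack (x - x') (y - y')"
  and stack_scale: "fsc c (stack x y) = stack (fsc c x) (fsc c y)"
  by (auto simp: fun_eq_iff stack_def fsc_apply)

lemma upper_hom: "module_hom (fsc :: 'a::field \<Rightarrow> _) fsc upper"
  and lower_hom: "module_hom (fsc :: 'a::field \<Rightarrow> _) fsc lower"
  unfolding module_hom_iff by (auto simp: fv.module_axioms upper_def lower_def fsc_def)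

lemma stack_zero_hom: "module_hom (fsc :: 'a::field \<Rightarrow> _) fsc (stack 0)"
  unfolding module_hom_iff
  by (auto simp: fv.module_axioms stack_add stack_scale fv.scale_zero_right)

lemma graph_hom:
  assumes "module_hom (fsc :: 'a::field \<Rightarrow> _) fsc Z"
  shows "module_hom (fsc :: 'a \<Rightarrow> _) fsc (\<lambda>x. stack x (Z x))"
  using assms unfolding module_hom_iff
  by (auto simp: fv.module_axioms stack_add stack_scale)

lemma stacked_independent:
  assumes "fv.independent B"
  shows "fv.independent ((\<lambda>j. stack (unit_vec j) (y j)) ` {..<q} \<union> stack 0 ` (B :: (nat \<Rightarrow> 'a::field) set))"
proof (induction q)
  case 0
  have "fv.independent (stack 0 ` B)"
    by (rule module_hom.independent_inj_image[OF stack_zero_hom assms])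
       (auto simp: inj_def stack_eq_iff)
  then show ?case by (metis lessThan_0 image_empty Un_empty_left)
next
  case (Suc q)
  let ?S = "(\<lambda>j. stack (unit_vec j) (y j)) ` {..<q} \<union> stack 0 ` B"
  have "fv.independent (insert (stack (unit_vec q) (y q)) ?S)"
    by (rule independent_insert_coordinate[where p="(True, q)", OF Suc.IH])
       (auto simp: stack_def unit_vec_def)
  then show ?case by (metis lessThan_Suc image_insert Un_insert_left)
qed

lemma stacked_rank_bound:
  fixes G :: "(bool \<times> nat \<Rightarrow> 'a::field) set"
  assumes "finite G" "\<forall>j<q. stack (unit_vec j) (y j) \<in> fv.span G"
  shows "q + fv.dim {z. stack 0 z \<in> fv.span G} \<le> card G"
proof -
  define W where "W = {z. stack 0 z \<in> fv.span G}"
  obtain B where B: "B \<subseteq> W" "fv.independent B" "card B = fv.dim W"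
    by (rule fv.basis_exists)
  define T where "T = (\<lambda>j. stack (unit_vec j) (y j)) ` {..<q} \<union> stack 0 ` B"
  have "T \<subseteq> fv.span G" using assms(2) B(1) unfolding T_def W_def by auto
  then have T: "finite T \<and> card T \<le> card G"
    using fv.independent_span_bound[OF assms(1) stacked_independent[OF B(2)]] unfolding T_def by blast
  have inj0: "inj (stack 0 :: _ \<Rightarrow> bool \<times> nat \<Rightarrow> 'a)" by (auto simp: inj_def stack_eq_iff)
  have finB: "finite B"
    using T inj0 unfolding T_def by (auto dest: finite_imageD intro: inj_on_subset)
  have inj_cols: "inj_on (\<lambda>j. stack (unit_vec j) (y j) :: bool \<times> nat \<Rightarrow> 'a) {..<q}"
    using inj_unit_vec by (auto simp: inj_on_def inj_def stack_eq_iff)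
  have "card T = q + card B"
    unfolding T_def using finB inj0 inj_cols
    by (subst card_Un_disjoint) (auto simp: card_image inj_on_subset stack_eq_iff unit_vec_nonzero)
  then show ?thesis using T B(3) unfolding W_def by simp
qed

lemma lower_block_subspace: "fv.subspace {z. stack 0 z \<in> fv.span (G :: (bool \<times> nat \<Rightarrow> 'a::field) set)}"
  using module_hom.subspace_vimage[OF stack_zero_hom fv.subspace_span] by (simp add: vimage_def)

lemma lower_block_span: "{z. stack 0 z \<in> fv.span (G :: (bool \<times> nat \<Rightarrow> 'a::field) set)} \<subseteq> fv.span (lower ` G)"
  using module_hom.spans_image[OF lower_hom, of "fv.span G" G] by (force simp: fv.span_superset)

lemma graph_in_span:
  assumes Z: "module_hom (fsc :: 'a::field \<Rightarrow> _) fsc Z"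
    and graph: "\<forall>j<m. stack (unit_vec j) (Z (unit_vec j)) \<in> fv.span G"
    and x: "\<forall>i\<ge>m. x i = (0::'a)"
  shows "stack x (Z x) \<in> fv.span G"
proof -
  define y where "y = (\<Sum>j<m. fsc (x j) (unit_vec j))"
  have "x = y" unfolding y_def by (rule unit_vec_expansion[OF x])
  then have "stack x (Z x) = stack y (Z y)" by simp
  also have "\<dots> = (\<Sum>j<m. stack (fsc (x j) (unit_vec j)) (Z (fsc (x j) (unit_vec j))))"
    unfolding y_def by (rule module_hom.sum[OF graph_hom[OF Z]])
  also have "\<dots> = (\<Sum>j<m. fsc (x j) (stack (unit_vec j) (Z (unit_vec j))))"
    by (simp add: module_hom.scale[OF graph_hom[OF Z]])
  also have "\<dots> \<in> fv.span G"
    using graph by (intro fv.span_sum fv.span_scale) auto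
  finally show ?thesis .
qed

lemma rank_one_image_in_span:
  fixes G :: "(bool \<times> nat \<Rightarrow> 'a::field) set"
  defines "W \<equiv> {z. stack 0 z \<in> fv.span G}"
  assumes Z: "module_hom fsc fsc Z" "\<And>y. Z (Z y) = 0"
    and graph: "\<forall>j<m. stack (unit_vec j) (Z (unit_vec j)) \<in> fv.span G"
    and gen: "stack (fsc \<alpha> x) (fsc \<beta> x) \<in> fv.span G" and x: "\<forall>i\<ge>m. x i = 0"
  shows "Z (fsc \<alpha> x) \<in> fv.span ((W \<inter> {y. Z y = 0}) \<union> Z ` W)"
proof (cases "\<alpha> = 0")
  case True
  then show ?thesis using module_hom.zero[OF Z(1)] by (simp add: fv.span_zero)
next
  case False
  define t where "t = \<beta> / \<alpha>"
  have "stack x (fsc t x) = fsc (1 / \<alpha>) (stack (fsc \<alpha> x) (fsc \<beta> x))"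
    using False by (simp add: stack_scale t_def)
  then have "stack x (fsc t x) \<in> fv.span G" using gen by (simp add: fv.span_scale)
  moreover have "stack x (Z x) \<in> fv.span G" by (rule graph_in_span[OF Z(1) graph x])
  ultimately have "stack x (fsc t x) - stack x (Z x) \<in> fv.span G" by (rule fv.span_diff)
  then have "fsc t x - Z x \<in> W" unfolding W_def by (simp add: stack_diff)
  then have "Z x \<in> fv.span ((W \<inter> {y. Z y = 0}) \<union> Z ` W)"
    using fv.square_zero_image_in_span[OF Z] lower_block_subspace unfolding W_def by blast
  then show ?thesis using module_hom.scale[OF Z(1)] by (simp add: fv.span_scale)
qed

definition shift :: "nat \<Rightarrow> nat \<Rightarrow> (nat \<Rightarrow> 'a::field) \<Rightarrow> nat \<Rightarrow> 'a" where
  "shift m c f = (\<lambda>i. if i + c < m then f (i + c) else 0)"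

lemma shift_hom: "module_hom (fsc :: 'a::field \<Rightarrow> _) fsc (shift m c)"
  unfolding module_hom_iff by (auto simp: fv.module_axioms fun_eq_iff shift_def fsc_def)

lemma shift_square_zero: "m \<le> c + c \<Longrightarrow> shift m c (shift m c x) = 0"
  by (auto simp: fun_eq_iff shift_def)

lemma shift_unit_vec:
  "shift m c (unit_vec j) = (if c \<le> j \<and> j < m then unit_vec (j - c) else (0 :: nat \<Rightarrow> 'a::field))"
  by (auto simp: fun_eq_iff shift_def unit_vec_def)

definition is_decomposition ::
    "nat \<Rightarrow> nat \<Rightarrow> nat \<Rightarrow> (nat \<Rightarrow> nat \<Rightarrow> 'a::field) \<Rightarrow> (nat \<Rightarrow> nat \<Rightarrow> 'a) \<Rightarrow>
     (nat \<Rightarrow> 'a) \<Rightarrow> (nat \<Rightarrow> 'a) \<Rightarrow> (nat \<Rightarrow> nat \<Rightarrow> 'a) \<Rightarrow> (nat \<Rightarrow> nat \<Rightarrow> 'a) \<Rightarrow> bool" where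
  "is_decomposition m n r A B \<alpha> \<beta> a b \<longleftrightarrow>
     (\<forall>i<m. \<forall>j<n. A i j = (\<Sum>l<r. \<alpha> l * a l i * b l j) \<and> B i j = (\<Sum>l<r. \<beta> l * a l i * b l j))"

definition trunc :: "nat \<Rightarrow> (nat \<Rightarrow> 'a::zero) \<Rightarrow> nat \<Rightarrow> 'a" where
  "trunc m f = (\<lambda>i. if i < m then f i else 0)"

definition column :: "nat \<Rightarrow> (nat \<Rightarrow> nat \<Rightarrow> 'a::zero) \<Rightarrow> (nat \<Rightarrow> nat \<Rightarrow> 'a) \<Rightarrow> nat \<Rightarrow> bool \<times> nat \<Rightarrow> 'a" where
  "column m A B j = stack (trunc m (\<lambda>i. A i j)) (trunc m (\<lambda>i. B i j))"

definition term_vec :: "nat \<Rightarrow> 'a::field \<Rightarrow> 'a \<Rightarrow> (nat \<Rightarrow> 'a) \<Rightarrow> bool \<times> nat \<Rightarrow> 'a" where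
  "term_vec m \<alpha> \<beta> a = stack (fsc \<alpha> (trunc m a)) (fsc \<beta> (trunc m a))"

lemma column_in_span:
  assumes "is_decomposition m n r A B \<alpha> \<beta> a b" "j < n"
  shows "column m A B j \<in> fv.span ((\<lambda>l. term_vec m (\<alpha> l) (\<beta> l) (a l)) ` {..<r})"
proof -
  have "column m A B j = (\<Sum>l<r. fsc (b l j) (term_vec m (\<alpha> l) (\<beta> l) (a l)))"
  proof (rule ext)
    fix p :: "bool \<times> nat"
    obtain s i where p: "p = (s, i)" by fastforce
    show "column m A B j p = (\<Sum>l<r. fsc (b l j) (term_vec m (\<alpha> l) (\<beta> l) (a l))) p"
      using assms unfolding p sum_fun_apply is_decomposition_def
      by (cases s; cases "i < m") (auto simp: column_def term_vec_def trunc_def fsc_def mult_ac)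
  qed
  then show ?thesis by (auto intro!: fv.span_sum fv.span_scale intro: fv.span_base)
qed

lemma column_X_left:
  assumes "m \<le> n" "j < m"
  shows "column m slice1 (slice2 n) j = stack (unit_vec j) (shift m (n - n div 2) (unit_vec j))"
  using assms
  by (auto simp: fun_eq_iff column_def stack_def trunc_def shift_def unit_vec_def slice1_def slice2_def)

lemma column_X_right:
  assumes "n \<le> 2 * m" "m \<le> j" "j < n"
  shows "column m slice1 (slice2 n) j = stack 0 (unit_vec (j - (n - n div 2)))"
  using assms
  by (auto simp: fun_eq_iff column_def stack_def trunc_def unit_vec_def slice1_def slice2_def)

section \<open>The lower bound\<close>

(* For any decomposition of X, with G its term vectors, W the lower block of span G and
   Z the shift by c = n - n div 2, the unit vectors e_i (i < n div 2) lie in the span of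
   the kernel part and the image of W: either e_(i+c) is a column's upper part and
   e_i = Z e_(i+c) is reached through the rank-one terms, or (0; e_i) is a column. *)
lemma unit_vecs_in_kernel_image_span:
  fixes m n r i :: nat and \<alpha> \<beta> :: "nat \<Rightarrow> 'a::field" and a b :: "nat \<Rightarrow> nat \<Rightarrow> 'a"
  defines "W \<equiv> {z. stack 0 z \<in> fv.span ((\<lambda>l. term_vec m (\<alpha> l) (\<beta> l) (a l)) ` {..<r})}"
    and "Z \<equiv> shift m (n - n div 2)"
  assumes mn: "m \<le> n" "n \<le> 2 * m" and dec: "is_decomposition m n r slice1 (slice2 n) \<alpha> \<beta> a b"
    and i: "i < n div 2"
  shows "unit_vec i \<in> fv.span ((W \<inter> {y. Z y = 0}) \<union> Z ` W)"
proof -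
  define G where "G = (\<lambda>l. term_vec m (\<alpha> l) (\<beta> l) (a l)) ` {..<r}"
  have W_G: "W = {z. stack 0 z \<in> fv.span G}" unfolding W_def G_def ..
  define c where "c = n - n div 2"
  define K where "K = fv.span ((W \<inter> {y. Z y = 0}) \<union> Z ` W)"
  have cols: "column m slice1 (slice2 n) j \<in> fv.span G" if "j < n" for j
    using column_in_span[OF dec that] unfolding G_def .
  have Z_hom: "module_hom fsc fsc Z" unfolding Z_def by (rule shift_hom)
  have Z_square: "Z (Z y) = 0" for y unfolding Z_def using mn by (intro shift_square_zero) auto
  show ?thesis
  proof (cases "i + c < m")
    case True
    have graph: "\<forall>j<m. stack (unit_vec j) (Z (unit_vec j)) \<in> fv.span G"
      using cols column_X_left[OF mn(1)] mn(1) unfolding Z_def by (metis order_less_le_trans)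
    have "Z (upper g) \<in> K" if "g \<in> G" for g
    proof -
      obtain l where g: "g = term_vec m (\<alpha> l) (\<beta> l) (a l)" using \<open>g \<in> G\<close> G_def by auto
      have "g \<in> fv.span G" using \<open>g \<in> G\<close> by (rule fv.span_base)
      then show ?thesis
        using rank_one_image_in_span[OF Z_hom Z_square graph, of "\<alpha> l" "trunc m (a l)" "\<beta> l"]
        unfolding K_def W_G g term_vec_def by (simp add: trunc_def)
    qed
    then have ZG: "fv.span (Z ` upper ` G) \<subseteq> K"
      unfolding K_def by (intro fv.span_minimal) auto
    have "unit_vec (i + c) = upper (column m (slice1 :: nat \<Rightarrow> nat \<Rightarrow> 'a) (slice2 n) (i + c))"
      unfolding column_X_left[OF mn(1) True] by (rule upper_stack[symmetric])
    also have "\<dots> \<in> fv.span (upper ` G)"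
      using module_hom.spans_image[OF upper_hom, of "{column m slice1 (slice2 n) (i + c)}" G]
        cols[of "i + c"] True mn(1) by auto
    finally have "Z (unit_vec (i + c)) \<in> fv.span (Z ` upper ` G)"
      using module_hom.spans_image[OF Z_hom, of "{unit_vec (i + c)}"] by auto
    moreover have "Z (unit_vec (i + c)) = unit_vec i"
      using True unfolding Z_def c_def[symmetric] by (simp add: shift_unit_vec)
    ultimately show ?thesis using ZG unfolding K_def by auto
  next
    case False
    have "i + c < n" "i < c" using i unfolding c_def by presburger+
    then have "column m (slice1 :: nat \<Rightarrow> nat \<Rightarrow> 'a) (slice2 n) (i + c) = stack 0 (unit_vec i)"
      using column_X_right[OF mn(2), of "i + c"] False unfolding c_def[symmetric] by simp
    then have "unit_vec i \<in> W" using cols[OF \<open>i + c < n\<close>] unfolding W_G by simp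
    moreover have "Z (unit_vec i) = 0"
      using \<open>i < c\<close> unfolding Z_def c_def[symmetric] by (simp add: shift_unit_vec)
    ultimately show ?thesis by (intro fv.span_base) auto
  qed
qed

(* Any decomposition of X has at least m + n div 2 terms: the term vectors span the m
   graph columns and the lower block W, so r >= m + dim W, while the k = n div 2 unit
   vectors above lie in a space spanned by at most dim W vectors. *)
lemma rank_lower_bound:
  fixes \<alpha> \<beta> :: "nat \<Rightarrow> 'a::field" and a b :: "nat \<Rightarrow> nat \<Rightarrow> 'a"
  assumes mn: "m \<le> n" "n \<le> 2 * m" and dec: "is_decomposition m n r slice1 (slice2 n) \<alpha> \<beta> a b"
  shows "m + n div 2 \<le> r"
proof -
  define G where "G = (\<lambda>l. term_vec m (\<alpha> l) (\<beta> l) (a l)) ` {..<r}"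
  define W where "W = {z. stack 0 z \<in> fv.span G}"
  define Z :: "(nat \<Rightarrow> 'a) \<Rightarrow> nat \<Rightarrow> 'a" where "Z = shift m (n - n div 2)"
  have "finite G" "card G \<le> r" unfolding G_def by (auto intro: card_image_le[THEN order_trans])
  have "\<forall>j<m. stack (unit_vec j) (Z (unit_vec j)) \<in> fv.span G"
    using column_in_span[OF dec] column_X_left[OF mn(1)] mn(1) unfolding G_def Z_def
    by (metis order_less_le_trans)
  then have dimW: "m + fv.dim W \<le> card G"
    unfolding W_def by (rule stacked_rank_bound[OF \<open>finite G\<close>])
  obtain S where S: "finite S" "card S \<le> fv.dim W" "(W \<inter> {x. Z x = 0}) \<union> Z ` W \<subseteq> fv.span S"
    using fv.kernel_image_span_bound[OF shift_hom lower_block_span finite_imageI[OF \<open>finite G\<close>]]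
    unfolding W_def Z_def by blast
  have "unit_vec ` {..<n div 2} \<subseteq> fv.span S"
    using unit_vecs_in_kernel_image_span[OF mn dec] fv.span_minimal[OF S(3) fv.subspace_span]
    unfolding G_def W_def Z_def by blast
  then have "n div 2 \<le> card S"
    using fv.independent_span_bound[OF S(1) unit_vecs_independent] card_unit_vecs by metis
  then show ?thesis using dimW S(2) \<open>card G \<le> r\<close> by linarith
qed

section \<open>The upper bound and the theorem\<close>

lemma explicit_decomposition:
  assumes mn: "m \<le> n" "n \<le> 2 * m"
  shows "\<exists>(\<alpha> :: nat \<Rightarrow> 'a::field) \<beta> a b.
    (\<forall>l<m + n div 2. (\<exists>i<m. a l i \<noteq> 0) \<and> (\<exists>j<n. b l j \<noteq> 0) \<and> (\<alpha> l, \<beta> l) \<noteq> (0, 0)) \<and>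
    is_decomposition m n (m + n div 2) slice1 (slice2 n) \<alpha> \<beta> a b"
proof -
  define c where "c = n - n div 2"
  have c: "c \<le> m" "n div 2 \<le> c" "n = c + n div 2" unfolding c_def using mn by auto
  define \<alpha> :: "nat \<Rightarrow> 'a" where "\<alpha> l = (if l < m then 1 else 0)" for l
  define \<beta> :: "nat \<Rightarrow> 'a" where "\<beta> l = (if l < m then 0 else 1)" for l
  define a :: "nat \<Rightarrow> nat \<Rightarrow> 'a" where "a l = unit_vec (if l < m then l else l - m)" for l
  define b :: "nat \<Rightarrow> nat \<Rightarrow> 'a" where "b l = unit_vec (if l < m then l else c + (l - m))" for l
  have nonzero: "(\<exists>i<m. a l i \<noteq> 0) \<and> (\<exists>j<n. b l j \<noteq> 0) \<and> (\<alpha> l, \<beta> l) \<noteq> (0, 0)"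
    if "l < m + n div 2" for l
    using that c mn by (cases "l < m") (auto simp: \<alpha>_def \<beta>_def a_def b_def unit_vec_def)
  have "slice1 i j = (\<Sum>l<m + n div 2. \<alpha> l * a l i * b l j)" if "i < m" for i j
  proof -
    have "(\<Sum>l<m + n div 2. \<alpha> l * a l i * b l j) = (\<Sum>l<m + n div 2. if l = i then slice1 i j else 0)"
      using that by (intro sum.cong) (auto simp: \<alpha>_def a_def b_def unit_vec_def slice1_def)
    then show ?thesis using that by simp
  qed
  moreover have "slice2 n i j = (\<Sum>l<m + n div 2. \<beta> l * a l i * b l j)" if "i < m" for i j
  proof -
    have "(\<Sum>l<m + n div 2. \<beta> l * a l i * b l j) = (\<Sum>l<m + n div 2. if l = m + i then slice2 n i j else 0)"
      using that by (intro sum.cong) (auto simp: \<beta>_def a_def b_def unit_vec_def slice2_def c_def)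
    then show ?thesis using that by (simp add: slice2_def)
  qed
  ultimately show ?thesis
    using nonzero unfolding is_decomposition_def by blast
qed

lemma tensor_rank_X:
  assumes "m \<le> n" "n \<le> 2 * m"
  shows "tensor_rank2 m n (slice1 :: nat \<Rightarrow> nat \<Rightarrow> 'a::field) (slice2 n) = m + n div 2"
  unfolding tensor_rank2_def
proof (rule Least_equality)
  show "\<exists>(\<alpha> :: nat \<Rightarrow> 'a) \<beta> a b.
      (\<forall>l<m + n div 2. (\<exists>i<m. a l i \<noteq> 0) \<and> (\<exists>j<n. b l j \<noteq> 0) \<and> (\<alpha> l, \<beta> l) \<noteq> (0, 0)) \<and>
      (\<forall>i<m. \<forall>j<n. slice1 i j = (\<Sum>l<m + n div 2. \<alpha> l * a l i * b l j) \<and>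
                     slice2 n i j = (\<Sum>l<m + n div 2. \<beta> l * a l i * b l j))"
    using explicit_decomposition[OF assms] unfolding is_decomposition_def .
next
  fix r
  assume "\<exists>(\<alpha> :: nat \<Rightarrow> 'a) \<beta> a b.
      (\<forall>l<r. (\<exists>i<m. a l i \<noteq> 0) \<and> (\<exists>j<n. b l j \<noteq> 0) \<and> (\<alpha> l, \<beta> l) \<noteq> (0, 0)) \<and>
      (\<forall>i<m. \<forall>j<n. slice1 i j = (\<Sum>l<r. \<alpha> l * a l i * b l j) \<and>
                     slice2 n i j = (\<Sum>l<r. \<beta> l * a l i * b l j))"
  then obtain \<alpha> \<beta> :: "nat \<Rightarrow> 'a" and a b where "is_decomposition m n r slice1 (slice2 n) \<alpha> \<beta> a b"
    unfolding is_decomposition_def by blast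
  then show "m + n div 2 \<le> r" by (rule rank_lower_bound[OF assms])
qed

theorem mainTheorem8:
  fixes m n :: nat
  assumes "m \<le> n" and "n \<le> 2 * m"
  shows "tensor_rank2 m n (slice1 :: nat \<Rightarrow> nat \<Rightarrow> real) (slice2 n) = m + n div 2 \<and>
         tensor_rank2 m n (slice1 :: nat \<Rightarrow> nat \<Rightarrow> complex) (slice2 n) = m + n div 2"
  using tensor_rank_X[OF assms, where 'a=real] tensor_rank_X[OF assms, where 'a=complex] by blast

end
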